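(* It is undecidable whether, for an arbitrary ranked alphabet $\Sigma$, computable strong bimonoid $B$, and bottom-up deterministic $(\Sigma,B)$-wta $\mathcal{A}$, the Nerode $(\Sigma,B)$-algebra $\mathcal{N}(\mathcal{A})$ is finite.
   Context: Ranked alphabet $\Sigma$ ($\Sigma^{(0)}\ne\emptyset$), trees $T_\Sigma$. Strong bimonoid $(B,\oplus,\otimes,\mathbb{0},\mathbb{1})$: commutative monoid $(B,\oplus,\mathbb{0})$, monoid $(B,\otimes,\mathbb{1})$, $\mathbb{0}\ne\mathbb{1}$, $\mathbb{0}$ absorbing; computable if $B$ is recursive and $\oplus,\otimes$ are computable. $(\Sigma,B)$-wta $\mathcal{A}=(Q,\delta,F)$: $Q$ finite nonempty, $\delta_k:Q^k\times\Sigma^{(k)}\times Q\to B$, $F:Q\to B$; bottom-up deterministic if for all $k,\sigma,q_1,\dots,q_k$ at most one $q$ has $\delta_k(q_1\dots q_k,\sigma,q)\ne\mathbb{0}$. Vector algebra $\mathrm{V}(\mathcal{A})=(B^Q,\delta_{\mathcal{A}})$, $\delta_{\mathcal{A}}(\sigma)(v_1,\dots,v_k)_q=\bigoplus_{q_1,\dots,q_k}\big(\bigotimes_{i=1}^k(v_i)_{q_i}\big)\otimes\delta_k(q_1\dots q_k,\sigma,q)$. The Nerode algebra $\mathcal{N}(\mathcal{A})=(Q_{\mathcal{N}},\theta_{\mathcal{N}},F_{\mathcal{N}})$ has carrier $Q_{\mathcal{N}}$ the smallest subset of $B^Q$ closed under all $\delta_{\mathcal{A}}(\sigma)$ (equivalently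 the image of the unique homomorphism $T_\Sigma\to\mathrm{V}(\mathcal{A})$), restricted operations, and $(F_{\mathcal{N}})_v=\bigoplus_q v_q\otimes F_q$; it is finite if $Q_{\mathcal{N}}$ is finite. *)

theory Defs
  imports Main "HOL-Library.Nat_Bijection"
begin

datatype recf = Z | S | Proj nat | Cn recf "recf list" | Pr recf recf | Mn recf

text \<open>Big-step semantics: evaluation of a program on an argument list
  (the first argument is the recursion / minimisation variable).\<close>
inductive eval :: "recf \<Rightarrow> nat list \<Rightarrow> nat \<Rightarrow> bool" where
  eval_Z: "eval Z xs 0"
| eval_S: "eval S (x # xs) (Suc x)"
| eval_Proj: "i < length xs \<Longrightarrow> eval (Proj i) xs (xs ! i)"
| eval_Cn: "length ys = length gs \<Longrightarrow> (\<forall>i < length gs. eval (gs ! i) xs (ys ! i))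
     \<Longrightarrow> eval f ys z \<Longrightarrow> eval (Cn f gs) xs z"
| eval_Pr0: "eval f xs y \<Longrightarrow> eval (Pr f g) (0 # xs) y"
| eval_PrS: "eval (Pr f g) (n # xs) y \<Longrightarrow> eval g (y # n # xs) z
     \<Longrightarrow> eval (Pr f g) (Suc n # xs) z"
| eval_Mn: "eval f (n # xs) 0 \<Longrightarrow> (\<forall>m < n. \<exists>y. eval f (m # xs) y \<and> y \<noteq> 0)
     \<Longrightarrow> eval (Mn f) xs n"

fun enc_recf :: "recf \<Rightarrow> nat" where
  "enc_recf Z = prod_encode (0, 0)"
| "enc_recf S = prod_encode (1, 0)"
| "enc_recf (Proj i) = prod_encode (2, i)"
| "enc_recf (Cn f gs) = prod_encode (3, prod_encode (enc_recf f, list_encode (map enc_recf gs)))"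
| "enc_recf (Pr f g) = prod_encode (4, prod_encode (enc_recf f, enc_recf g))"
| "enc_recf (Mn f) = prod_encode (5, enc_recf f)"

text \<open>An instance consists of
  \<^item> a program deciding the carrier B \<subseteq> nat (value 1 = member, 0 = non-member),
  \<^item> programs computing the binary operations plus and times,
  \<^item> the elements zero and one,
  \<^item> a ranked alphabet: symbol i (i < length ranks) has rank ranks ! i,
  \<^item> the number nQ of states (states are 0..nQ-1),
  \<^item> a finite table of transition weights (qs, sigma, q, w); missing entries have weight zero,
  \<^item> the root weights F (list of length nQ).\<close>
datatype inst = Inst
  (carP: recf) (plusP: recf) (timesP: recf) (zeroI: nat) (oneI: nat)
  (ranksI: "nat list") (nQ: nat) (deltaT: "(nat list \<times> nat \<times> nat \<times> nat) list")
  (finI: "nat list")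

definition enc_inst :: "inst \<Rightarrow> nat" where
  "enc_inst I = list_encode
     [enc_recf (carP I), enc_recf (plusP I), enc_recf (timesP I), zeroI I, oneI I,
      list_encode (ranksI I), nQ I,
      list_encode (map (\<lambda>(qs, s, q, w). list_encode [list_encode qs, s, q, w]) (deltaT I)),
      list_encode (finI I)]"

definition carrier :: "inst \<Rightarrow> nat set" where
  "carrier I = {n. eval (carP I) [n] 1}"

definition plusI :: "inst \<Rightarrow> nat \<Rightarrow> nat \<Rightarrow> nat" where
  "plusI I a b = (THE c. eval (plusP I) [a, b] c)"

definition timesI :: "inst \<Rightarrow> nat \<Rightarrow> nat \<Rightarrow> nat" where
  "timesI I a b = (THE c. eval (timesP I) [a, b] c)"

definition deltaI :: "inst \<Rightarrow> nat list \<Rightarrow> nat \<Rightarrow> nat \<Rightarrow> nat" where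
  "deltaI I qs s q =
     (case find (\<lambda>(qs', s', q', w). qs' = qs \<and> s' = s \<and> q' = q) (deltaT I) of
        Some (_, _, _, w) \<Rightarrow> w
      | None \<Rightarrow> zeroI I)"

definition computable_bimonoid :: "inst \<Rightarrow> bool" where
  "computable_bimonoid I \<longleftrightarrow>
     (\<forall>n. \<exists>v. eval (carP I) [n] v \<and> v \<le> 1) \<and>
     (\<forall>a \<in> carrier I. \<forall>b \<in> carrier I. \<exists>c \<in> carrier I. eval (plusP I) [a, b] c) \<and>
     (\<forall>a \<in> carrier I. \<forall>b \<in> carrier I. \<exists>c \<in> carrier I. eval (timesP I) [a, b] c)"

definition strong_bimonoid :: "inst \<Rightarrow> bool" where
  "strong_bimonoid I \<longleftrightarrow>
     (let B = carrier I; p = plusI I; t = timesI I; z = zeroI I; e = oneI I in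
      z \<in> B \<and> e \<in> B \<and> z \<noteq> e \<and>
      (\<forall>a\<in>B. \<forall>b\<in>B. \<forall>c\<in>B. p (p a b) c = p a (p b c)) \<and>
      (\<forall>a\<in>B. \<forall>b\<in>B. p a b = p b a) \<and>
      (\<forall>a\<in>B. p a z = a) \<and>
      (\<forall>a\<in>B. \<forall>b\<in>B. \<forall>c\<in>B. t (t a b) c = t a (t b c)) \<and>
      (\<forall>a\<in>B. t a e = a \<and> t e a = a) \<and>
      (\<forall>a\<in>B. t a z = z \<and> t z a = z))"

definition ranked_alphabet :: "inst \<Rightarrow> bool" where
  "ranked_alphabet I \<longleftrightarrow> (\<exists>s < length (ranksI I). ranksI I ! s = 0)"

definition wta_ok :: "inst \<Rightarrow> bool" where
  "wta_ok I \<longleftrightarrow> nQ I > 0 \<and> length (finI I) = nQ I \<and> set (finI I) \<subseteq> carrier I \<and>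
     (\<forall>(qs, s, q, w) \<in> set (deltaT I). w \<in> carrier I)"

definition bu_deterministic :: "inst \<Rightarrow> bool" where
  "bu_deterministic I \<longleftrightarrow>
     (\<forall>s < length (ranksI I). \<forall>qs. length qs = ranksI I ! s \<and> set qs \<subseteq> {..<nQ I} \<longrightarrow>
        (\<forall>q < nQ I. \<forall>q' < nQ I. deltaI I qs s q \<noteq> zeroI I \<and> deltaI I qs s q' \<noteq> zeroI I
            \<longrightarrow> q = q'))"

definition valid_instance :: "inst \<Rightarrow> bool" where
  "valid_instance I \<longleftrightarrow> computable_bimonoid I \<and> strong_bimonoid I \<and> ranked_alphabet I \<and>
     wta_ok I \<and> bu_deterministic I"

datatype tree = Node nat "tree list"

fun wf_tree :: "inst \<Rightarrow> tree \<Rightarrow> bool" where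
  "wf_tree I (Node s ts) \<longleftrightarrow> s < length (ranksI I) \<and> length ts = ranksI I ! s \<and>
     (\<forall>t \<in> set ts. wf_tree I t)"

definition sumI :: "inst \<Rightarrow> nat list \<Rightarrow> nat" where
  "sumI I xs = foldr (plusI I) xs (zeroI I)"

definition prodI :: "inst \<Rightarrow> nat list \<Rightarrow> nat" where
  "prodI I xs = foldr (timesI I) xs (oneI I)"

text \<open>delta_A(sigma)(v_1,...,v_k)_q, vectors in B^Q as lists of length nQ.\<close>
definition vec_op :: "inst \<Rightarrow> nat \<Rightarrow> nat list list \<Rightarrow> nat list" where
  "vec_op I s vs = map (\<lambda>q. sumI I
      (map (\<lambda>qs. timesI I (prodI I (map (\<lambda>i. (vs ! i) ! (qs ! i)) [0..<length vs]))
                          (deltaI I qs s q))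
           (List.n_lists (length vs) [0..<nQ I]))) [0..<nQ I]"

text \<open>The unique homomorphism from the term algebra into V(A).\<close>
fun hvec :: "inst \<Rightarrow> tree \<Rightarrow> nat list" where
  "hvec I (Node s ts) = vec_op I s (map (hvec I) ts)"

definition nerode_carrier :: "inst \<Rightarrow> nat list set" where
  "nerode_carrier I = hvec I ` {t. wf_tree I t}"

end

theory Submission
  imports Defs
begin

text \<open>Diagonalisation. For a program \<open>d\<close> consider the one-state bottom-up deterministic wta
  over \<open>\<alpha>\<close> (rank 0) and \<open>\<gamma>\<close> (rank 1) with weights in the strong bimonoid \<open>(\<nat>, +, \<odot>, 0, 1)\<close>,
  where \<open>\<odot>\<close> multiplies two numbers \<open>2 + \<langle>w, s\<rangle>\<close> with the same tag \<open>w\<close> by adding their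
  counters \<open>s\<close> and truncating the sum at the least clock value at which \<open>d\<close>, run on the code of
  this very wta, returns a nonzero answer (no truncation if there is none). The Nerode algebra
  consists of the vectors of the trees \<open>\<gamma>\<^sup>n(\<alpha>)\<close>, which are determined by the truncation
  of \<open>n\<close>; so it is finite iff truncation happens, i.e. iff \<open>d\<close> answers nonzero (``infinite'')
  on this wta, and \<open>d\<close> is wrong on it.
  The self-reference is harmless: the tag \<open>w\<close> is the index of the program computing \<open>\<odot>\<close>, the
  code of the wta is a computable function of \<open>w\<close>, and the truncation only needs the clocked
  evaluation of the fixed program \<open>d\<close>, which is total and computable.\<close>

section \<open>Evaluation of programs\<close>

lemma eval_deterministic: "eval f xs v \<Longrightarrow> eval f xs v' \<Longrightarrow> v = v'"
proof (induction arbitrary: v' rule: eval.induct)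
  case (eval_Cn ys gs xs f z)
  from eval_Cn.prems show ?case
  proof (cases rule: eval.cases)
    case (eval_Cn ys')
    have "ys' = ys"
    proof (rule nth_equalityI)
      show "length ys' = length ys" using eval_Cn.hyps(1) local.eval_Cn by simp
      fix i assume "i < length ys'"
      then show "ys' ! i = ys ! i" using eval_Cn.IH(1) local.eval_Cn eval_Cn.hyps(1) by metis
    qed
    then show ?thesis using eval_Cn.IH(2) local.eval_Cn by auto
  qed
next
  case (eval_Mn f n xs)
  from eval_Mn.prems show ?case
  proof (cases rule: eval.cases)
    case eval_Mn
    then have "\<not> n < v'" and "\<not> v' < n"
      using eval_Mn.IH by (metis, metis)
    then show ?thesis by simp
  qed
next
  case (eval_Pr0 f xs y g)
  from eval_Pr0.prems show ?case by (cases rule: eval.cases) (use eval_Pr0.IH in auto)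
next
  case (eval_PrS f g n xs y z)
  from eval_PrS.prems show ?case by (cases rule: eval.cases) (use eval_PrS.IH in auto)
qed (erule eval.cases; simp)+

lemma eval_Z_eq: "v = 0 \<Longrightarrow> eval Z xs v"
  using eval_Z by simp

lemma eval_S_eq: "v = Suc x \<Longrightarrow> eval S (x # xs) v"
  using eval_S by simp

lemma eval_Proj_eq: "i < length xs \<Longrightarrow> v = xs ! i \<Longrightarrow> eval (Proj i) xs v"
  using eval_Proj by simp

lemma eval_Cn_list_all2:
  "list_all2 (\<lambda>g y. eval g xs y) gs ys \<Longrightarrow> eval f ys z \<Longrightarrow> eval (Cn f gs) xs z"
  by (rule eval_Cn) (auto simp: list_all2_conv_all_nth)

lemma eval_Cn_unary: "eval g xs a \<Longrightarrow> eval f [a] z \<Longrightarrow> eval (Cn f [g]) xs z"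
  by (rule eval_Cn_list_all2[where ys = "[a]"]) auto

lemma eval_Cn_binary:
  "eval g1 xs a \<Longrightarrow> eval g2 xs b \<Longrightarrow> eval f [a, b] z \<Longrightarrow> eval (Cn f [g1, g2]) xs z"
  by (rule eval_Cn_list_all2[where ys = "[a, b]"]) auto

lemma eval_Cn_ternary:
  "eval g1 xs a \<Longrightarrow> eval g2 xs b \<Longrightarrow> eval g3 xs c \<Longrightarrow> eval f [a, b, c] z
    \<Longrightarrow> eval (Cn f [g1, g2, g3]) xs z"
  by (rule eval_Cn_list_all2[where ys = "[a, b, c]"]) auto

lemma eval_Proj_upt:
  assumes "xs = as @ ys" and "a = length as" and "b = a + length ys"
  shows "list_all2 (\<lambda>g y. eval g xs y) (map Proj [a..<b]) ys"
  using assms by (auto simp: list_all2_conv_all_nth nth_append intro!: eval_Proj_eq)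

lemma eval_value_subst: "eval f xs v \<Longrightarrow> v = w \<Longrightarrow> eval f xs w"
  by simp

lemma eval_Pr_iterate:
  assumes "eval f ys (h 0)" and "\<And>j. j < n \<Longrightarrow> eval g (h j # j # ys) (h (Suc j))"
  shows "eval (Pr f g) (n # ys) (h n)"
  using assms by (induction n) (auto intro: eval_Pr0 eval_PrS)

section \<open>Basic programs\<close>

primrec r_const :: "nat \<Rightarrow> recf" where
  "r_const 0 = Z"
| "r_const (Suc c) = Cn S [r_const c]"

definition "r_add = Pr (Proj 0) (Cn S [Proj 0])"
definition "r_dec = Pr Z (Proj 1)"
definition "r_sub = Cn (Pr (Proj 0) (Cn r_dec [Proj 0])) [Proj 1, Proj 0]"
definition "r_mul = Pr Z (Cn r_add [Proj 0, Proj 2])"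
definition "r_ifz = Pr (Proj 0) (Proj 3)"
definition "r_triangle = Pr Z (Cn r_add [Proj 0, Cn S [Proj 1]])"
definition "r_prod_encode = Cn r_add [Cn r_triangle [Cn r_add [Proj 0, Proj 1]], Proj 0]"

lemma eval_r_const: "eval (r_const c) xs c"
  by (induction c) (auto intro: eval_Cn_unary eval_Z eval_S)

lemma eval_r_add: "eval r_add (x # y # ys) (x + y)"
  unfolding r_add_def
  by (rule eval_Pr_iterate[where h = "\<lambda>x. x + y"])
     (auto intro!: eval_Proj_eq eval_Cn_unary eval_S_eq)

lemma eval_r_dec: "eval r_dec (x # ys) (x - 1)"
  unfolding r_dec_def
  by (rule eval_Pr_iterate[where h = "\<lambda>x. x - 1"]) (auto intro!: eval_Proj_eq eval_Z_eq)

lemma eval_r_sub: "eval r_sub (x # y # ys) (x - y)"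
proof -
  have monus: "eval (Pr (Proj 0) (Cn r_dec [Proj 0])) [y, x] (x - y)"
    by (rule eval_Pr_iterate[where h = "\<lambda>y. x - y"])
       (auto intro!: eval_Proj_eq eval_Cn_unary intro: eval_r_dec[THEN eval_value_subst])
  show ?thesis
    unfolding r_sub_def by (rule eval_Cn_binary[OF _ _ monus]) (auto intro: eval_Proj_eq)
qed

lemma eval_r_mul: "eval r_mul (x # y # ys) (x * y)"
  unfolding r_mul_def
  by (rule eval_Pr_iterate[where h = "\<lambda>x. x * y"])
     (auto intro!: eval_Z_eq eval_Cn_binary eval_Proj_eq intro: eval_r_add[THEN eval_value_subst])

lemma eval_r_ifz: "eval r_ifz (c # a # b # ys) (if c = 0 then a else b)"
  unfolding r_ifz_def
  by (rule eval_Pr_iterate[where h = "\<lambda>c. if c = 0 then a else b"]) (auto intro!: eval_Proj_eq)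

lemma eval_r_triangle: "eval r_triangle (n # ys) (triangle n)"
  unfolding r_triangle_def
  by (rule eval_Pr_iterate[where h = triangle])
     (auto intro!: eval_Z_eq eval_Cn_binary eval_Cn_unary eval_Proj_eq eval_S_eq
       intro: eval_r_add[THEN eval_value_subst])

lemma eval_r_prod_encode: "eval r_prod_encode (x # y # ys) (prod_encode (x, y))"
  unfolding r_prod_encode_def prod_encode_def
  by (rule eval_Cn_binary[OF eval_Cn_unary[OF eval_Cn_binary[OF _ _ eval_r_add] eval_r_triangle]
        _ eval_r_add[THEN eval_value_subst]])
     (auto intro: eval_Proj_eq)

lemma Least_triangle_bounds:
  fixes p :: nat
  defines "K \<equiv> LEAST t. p < triangle (Suc t)"
  shows "triangle K \<le> p" and "p < triangle (Suc K)"
proof -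
  have "p < triangle (Suc p)"
    by (induction p) auto
  then show upper: "p < triangle (Suc K)"
    unfolding K_def by (rule LeastI)
  show "triangle K \<le> p"
  proof (cases K)
    case (Suc K')
    then have "\<not> p < triangle (Suc K')"
      using not_less_Least[of K' "\<lambda>t. p < triangle (Suc t)"] unfolding K_def by simp
    then show ?thesis using Suc by simp
  qed simp
qed

lemma prod_decode_by_triangle:
  fixes p :: nat
  defines "K \<equiv> LEAST t. p < triangle (Suc t)"
  shows "prod_decode p = (p - triangle K, K - (p - triangle K))"
proof -
  have "prod_encode (p - triangle K, K - (p - triangle K)) = p"
    using Least_triangle_bounds[of p] unfolding K_def[symmetric] by (simp add: prod_encode_def)
  then show ?thesis
    by (metis prod_encode_inverse)
qed

definition "r_pdec_level = Mn (Cn r_sub [Cn S [Proj 1], Cn r_triangle [Cn S [Proj 0]]])"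
definition "r_pdec1 = Cn r_sub [Proj 0, Cn r_triangle [r_pdec_level]]"
definition "r_pdec2 = Cn r_sub [r_pdec_level, r_pdec1]"

lemma eval_r_pdec_level: "eval r_pdec_level (p # ys) (LEAST t. p < triangle (Suc t))"
proof -
  let ?f = "Cn r_sub [Cn S [Proj 1], Cn r_triangle [Cn S [Proj 0]]]"
  have f: "eval ?f (t # p # ys) (Suc p - triangle (Suc t))" for t
    by (rule eval_Cn_binary[OF _ eval_Cn_unary[OF _ eval_r_triangle] eval_r_sub])
       (auto intro!: eval_Cn_unary eval_Proj_eq eval_S_eq)
  define K where "K = (LEAST t. p < triangle (Suc t))"
  have "p < triangle (Suc K)"
    using Least_triangle_bounds(2)[of p] unfolding K_def .
  moreover have "triangle (Suc t) \<le> p" if "t < K" for t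
    using that not_less_Least unfolding K_def not_less[symmetric] by blast
  ultimately show ?thesis
    unfolding r_pdec_level_def K_def[symmetric]
    by (intro eval_Mn f[THEN eval_value_subst] allI impI exI conjI)
       (auto simp del: triangle_Suc simp: less_Suc_eq_le)
qed

lemma eval_r_pdec1: "eval r_pdec1 (p # ys) (fst (prod_decode p))"
  unfolding r_pdec1_def
  by (rule eval_Cn_binary[OF _ eval_Cn_unary[OF eval_r_pdec_level eval_r_triangle]
        eval_r_sub[THEN eval_value_subst]])
     (auto intro: eval_Proj_eq simp: prod_decode_by_triangle[of p])

lemma eval_r_pdec2: "eval r_pdec2 (p # ys) (snd (prod_decode p))"
  unfolding r_pdec2_def
  by (rule eval_Cn_binary[OF eval_r_pdec_level eval_r_pdec1 eval_r_sub[THEN eval_value_subst]])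
     (simp add: prod_decode_by_triangle[of p])

fun r_prod_list :: "recf list \<Rightarrow> recf" where
  "r_prod_list [] = r_const 1"
| "r_prod_list (g # gs) = Cn r_mul [g, r_prod_list gs]"

lemma eval_r_prod_list:
  "list_all2 (\<lambda>g y. eval g xs y) gs ys \<Longrightarrow> eval (r_prod_list gs) xs (prod_list ys)"
proof (induction gs arbitrary: ys)
  case Nil
  then show ?case using eval_r_const[of 1 xs] by simp
next
  case (Cons g gs)
  then obtain y ys' where "ys = y # ys'" "eval g xs y" "list_all2 (\<lambda>g y. eval g xs y) gs ys'"
    by (cases ys) auto
  then show ?case
    using Cons.IH by (auto intro!: eval_Cn_binary eval_r_mul)
qed

fun r_list_encode :: "recf list \<Rightarrow> recf" where
  "r_list_encode [] = Z"
| "r_list_encode (g # gs) = Cn S [Cn r_prod_encode [g, r_list_encode gs]]"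

lemma eval_r_list_encode:
  "list_all2 (\<lambda>g y. eval g xs y) gs ys \<Longrightarrow> eval (r_list_encode gs) xs (list_encode ys)"
proof (induction gs arbitrary: ys)
  case Nil
  then show ?case by (auto intro: eval_Z)
next
  case (Cons g gs)
  then obtain y ys' where "ys = y # ys'" "eval g xs y" "list_all2 (\<lambda>g y. eval g xs y) gs ys'"
    by (cases ys) auto
  then show ?case
    using Cons.IH by (auto intro!: eval_Cn_unary eval_Cn_binary eval_r_prod_encode eval_S_eq)
qed

section \<open>Clocked evaluation\<close>

text \<open>\<open>clocked f k xs\<close> is \<open>Suc v\<close> if \<open>f\<close> yields \<open>v\<close> on \<open>xs\<close> with every minimisation finding its
  zero below \<open>k\<close>, and \<open>0\<close> otherwise. The search state \<open>clocked_Mn F xs j\<close> is \<open>0\<close> while all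
  values tried so far are defined and positive, \<open>Suc (Suc m)\<close> once the zero \<open>m\<close> is found, and
  \<open>1\<close> once an undefined value is met.\<close>

primrec clocked_Pr :: "(nat list \<Rightarrow> nat) \<Rightarrow> (nat list \<Rightarrow> nat) \<Rightarrow> nat list \<Rightarrow> nat \<Rightarrow> nat" where
  "clocked_Pr F G ys 0 = F ys"
| "clocked_Pr F G ys (Suc j) =
     (let r = clocked_Pr F G ys j in if r = 0 then 0 else G ((r - 1) # j # ys))"

primrec clocked_Mn :: "(nat list \<Rightarrow> nat) \<Rightarrow> nat list \<Rightarrow> nat \<Rightarrow> nat" where
  "clocked_Mn F xs 0 = 0"
| "clocked_Mn F xs (Suc j) =
     (let t = clocked_Mn F xs j in
      if t \<noteq> 0 then t else let r = F (j # xs) in if r = 0 then 1 else if r = 1 then j + 2 else 0)"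

fun clocked :: "recf \<Rightarrow> nat \<Rightarrow> nat list \<Rightarrow> nat" where
  "clocked Z k xs = 1"
| "clocked S k xs = (case xs of [] \<Rightarrow> 0 | x # _ \<Rightarrow> Suc (Suc x))"
| "clocked (Proj i) k xs = (if i < length xs then Suc (xs ! i) else 0)"
| "clocked (Cn f gs) k xs =
     (let rs = map (\<lambda>g. clocked g k xs) gs in
      if 0 \<in> set rs then 0 else clocked f k (map (\<lambda>r. r - 1) rs))"
| "clocked (Pr f g) k xs =
     (case xs of [] \<Rightarrow> 0 | m # ys \<Rightarrow> clocked_Pr (clocked f k) (clocked g k) ys m)"
| "clocked (Mn f) k xs = clocked_Mn (clocked f k) xs k - 1"

lemma clocked_Mn_eq_0_iff:
  "clocked_Mn F xs j = 0 \<longleftrightarrow> (\<forall>i<j. \<exists>y. F (i # xs) = Suc (Suc y))"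
  by (induction j) (auto simp: Let_def less_Suc_eq gr0_conv_Suc numeral_2_eq_2 dest: less_2_cases)

lemma clocked_Mn_eq_found_iff:
  "clocked_Mn F xs j = Suc (Suc m) \<longleftrightarrow>
     m < j \<and> F (m # xs) = 1 \<and> (\<forall>i<m. \<exists>y. F (i # xs) = Suc (Suc y))"
proof (induction j)
  case (Suc j)
  then show ?case
    using clocked_Mn_eq_0_iff[of F xs j]
    by (cases "clocked_Mn F xs j = 0") (auto simp: Let_def less_Suc_eq)
qed simp

lemma clocked_Pr_SucE:
  assumes "clocked_Pr F G ys (Suc m) = Suc v"
  obtains r where "clocked_Pr F G ys m = Suc r" and "G (r # m # ys) = Suc v"
  using assms by (cases "clocked_Pr F G ys m") (auto simp: Let_def)

lemma clocked_Pr_sound: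
  assumes "\<And>ys v. F ys = Suc v \<Longrightarrow> eval f ys v" and "\<And>ys v. G ys = Suc v \<Longrightarrow> eval g ys v"
  shows "clocked_Pr F G ys m = Suc v \<Longrightarrow> eval (Pr f g) (m # ys) v"
proof (induction m arbitrary: v)
  case 0
  then show ?case using assms(1) by (auto intro: eval_Pr0)
next
  case (Suc m)
  then show ?case
    by (elim clocked_Pr_SucE) (auto intro: eval_PrS assms(2))
qed

lemma clocked_Pr_mono:
  assumes "\<And>ys v. F ys = Suc v \<Longrightarrow> F' ys = Suc v" and "\<And>ys v. G ys = Suc v \<Longrightarrow> G' ys = Suc v"
  shows "clocked_Pr F G ys m = Suc v \<Longrightarrow> clocked_Pr F' G' ys m = Suc v"
proof (induction m arbitrary: v)
  case 0
  then show ?case using assms(1) by simp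
next
  case (Suc m)
  then show ?case
    by (elim clocked_Pr_SucE) (auto simp: assms(2))
qed

lemma clocked_sound: "clocked f k xs = Suc v \<Longrightarrow> eval f xs v"
proof (induction f arbitrary: xs v)
  case (Cn f gs)
  let ?rs = "map (\<lambda>g. clocked g k xs) gs"
  have defined: "0 \<notin> set ?rs" and outer: "clocked f k (map (\<lambda>r. r - 1) ?rs) = Suc v"
    using Cn.prems by (auto simp: Let_def split: if_splits)
  have "eval g xs (clocked g k xs - 1)" if "g \<in> set gs" for g
  proof -
    have "clocked g k xs \<noteq> 0"
      using defined that by force
    then show ?thesis
      using Cn.IH(2)[OF that, of xs "clocked g k xs - 1"] by simp
  qed
  then have "list_all2 (\<lambda>g y. eval g xs y) gs (map (\<lambda>r. r - 1) ?rs)"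
    by (simp add: list_all2_conv_all_nth)
  then show ?case
    using Cn.IH(1)[OF outer] by (rule eval_Cn_list_all2)
next
  case (Pr f g)
  then obtain m ys where "xs = m # ys" and "clocked_Pr (clocked f k) (clocked g k) ys m = Suc v"
    by (cases xs) auto
  then show ?case
    using clocked_Pr_sound[OF Pr.IH] by blast
next
  case (Mn f)
  then have "clocked_Mn (clocked f k) xs k = Suc (Suc v)"
    by simp
  then have "clocked f k (v # xs) = Suc 0" and "\<forall>i<v. \<exists>y. clocked f k (i # xs) = Suc (Suc y)"
    unfolding clocked_Mn_eq_found_iff by auto
  then show ?case
    using Mn.IH by (blast intro: eval_Mn)
qed (auto intro: eval_Z_eq eval_S_eq eval_Proj_eq split: list.splits if_splits)

lemma clocked_mono: "clocked f k xs = Suc v \<Longrightarrow> k \<le> k' \<Longrightarrow> clocked f k' xs = Suc v"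
proof (induction f arbitrary: xs v)
  case (Cn f gs)
  let ?rs = "map (\<lambda>g. clocked g k xs) gs"
  have defined: "0 \<notin> set ?rs" and outer: "clocked f k (map (\<lambda>r. r - 1) ?rs) = Suc v"
    using Cn.prems by (auto simp: Let_def split: if_splits)
  have "clocked g k' xs = clocked g k xs" if "g \<in> set gs" for g
  proof -
    have "clocked g k xs \<noteq> 0"
      using defined that by force
    then show ?thesis
      using Cn.IH(2)[OF that, of xs "clocked g k xs - 1"] Cn.prems(2) by simp
  qed
  then have "map (\<lambda>g. clocked g k' xs) gs = ?rs"
    by simp
  then show ?case
    unfolding clocked.simps Let_def using defined Cn.IH(1)[OF outer Cn.prems(2)] by presburger
next
  case (Pr f g)
  then obtain m ys where "xs = m # ys" and "clocked_Pr (clocked f k) (clocked g k) ys m = Suc v"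
    by (cases xs) auto
  then show ?case
    using clocked_Pr_mono[of "clocked f k" "clocked f k'" "clocked g k" "clocked g k'"] Pr by simp
next
  case (Mn f)
  then have "clocked_Mn (clocked f k) xs k = Suc (Suc v)"
    by simp
  then have "v < k" "clocked f k (v # xs) = Suc 0" "\<forall>i<v. \<exists>y. clocked f k (i # xs) = Suc (Suc y)"
    unfolding clocked_Mn_eq_found_iff by auto
  then have "clocked_Mn (clocked f k') xs k' = Suc (Suc v)"
    unfolding clocked_Mn_eq_found_iff using Mn.IH Mn.prems(2) by fastforce
  then show ?case
    by simp
qed auto

lemma ex_common_bound:
  fixes P :: "nat \<Rightarrow> nat \<Rightarrow> bool"
  assumes "\<forall>i<n. \<exists>k. P i k" and "\<And>i k k'. P i k \<Longrightarrow> k \<le> k' \<Longrightarrow> P i k'"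
  shows "\<exists>K. \<forall>i<n. P i K"
proof -
  obtain k where "\<forall>i<n. P i (k i)"
    using assms(1) by metis
  moreover have "k i \<le> (\<Sum>j<n. k j)" if "i < n" for i
    using that by (intro member_le_sum) auto
  ultimately show ?thesis
    using assms(2) by blast
qed

lemma clocked_complete: "eval f xs v \<Longrightarrow> \<exists>k. clocked f k xs = Suc v"
proof (induction rule: eval.induct)
  case (eval_Cn ys gs xs f z)
  obtain K where K: "\<forall>i<length gs. clocked (gs ! i) K xs = Suc (ys ! i)"
    using ex_common_bound[of "length gs" "\<lambda>i k. clocked (gs ! i) k xs = Suc (ys ! i)"]
      eval_Cn.IH(1) clocked_mono by blast
  obtain k where k: "clocked f k ys = Suc z"
    using eval_Cn.IH(2) by blast
  have "clocked (gs ! i) (max K k) xs = Suc (ys ! i)" if "i < length gs" for i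
    using K that clocked_mono[of "gs ! i" K xs "ys ! i" "max K k"] by simp
  then have "map (\<lambda>g. clocked g (max K k) xs) gs = map Suc ys"
    by (simp add: list_eq_iff_nth_eq eval_Cn.hyps(1))
  then have "clocked (Cn f gs) (max K k) xs = Suc z"
    using clocked_mono[OF k] by (simp add: comp_def)
  then show ?case by blast
next
  case (eval_PrS f g n xs y z)
  then obtain k1 k2 where
    k1: "clocked (Pr f g) k1 (n # xs) = Suc y" and k2: "clocked g k2 (y # n # xs) = Suc z"
    by blast
  have "clocked (Pr f g) (max k1 k2) (n # xs) = Suc y" "clocked g (max k1 k2) (y # n # xs) = Suc z"
    using clocked_mono[OF k1] clocked_mono[OF k2] by simp_all
  then have "clocked (Pr f g) (max k1 k2) (Suc n # xs) = Suc z"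
    by (simp add: Let_def)
  then show ?case by blast
next
  case (eval_Mn f n xs)
  obtain k0 where k0: "clocked f k0 (n # xs) = Suc 0"
    using eval_Mn.IH by blast
  have "\<exists>k y. clocked f k (i # xs) = Suc (Suc y)" if i: "i < n" for i
  proof -
    obtain y k where "y \<noteq> 0" "clocked f k (i # xs) = Suc y"
      using eval_Mn.IH(2) i by blast
    then show ?thesis
      by (cases y) auto
  qed
  moreover have "\<exists>y. clocked f k' (i # xs) = Suc (Suc y)"
    if "\<exists>y. clocked f k (i # xs) = Suc (Suc y)" and "k \<le> k'" for i k k'
    using that clocked_mono by blast
  ultimately obtain K where K: "\<forall>i<n. \<exists>y. clocked f K (i # xs) = Suc (Suc y)"
    using ex_common_bound[of n "\<lambda>i k. \<exists>y. clocked f k (i # xs) = Suc (Suc y)"] by presburger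
  let ?k = "max (max K k0) (Suc n)"
  have "\<forall>i<n. \<exists>y. clocked f ?k (i # xs) = Suc (Suc y)"
    using K clocked_mono[of f K, OF _ max.cobounded1[THEN max.coboundedI1]] by blast
  moreover have "clocked f ?k (n # xs) = Suc 0"
    using clocked_mono[OF k0] by simp
  ultimately have "clocked_Mn (clocked f ?k) xs ?k = Suc (Suc n)"
    unfolding clocked_Mn_eq_found_iff by simp
  then have "clocked (Mn f) ?k xs = Suc n"
    by simp
  then show ?case by blast
qed auto

definition r_clocked_Cn :: "recf \<Rightarrow> recf list \<Rightarrow> recf" where
  "r_clocked_Cn f' gs' =
     Cn r_ifz [r_prod_list gs', Z, Cn f' (Proj 0 # map (\<lambda>g'. Cn r_dec [g']) gs')]"

lemma eval_r_clocked_Cn: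
  assumes "list_all2 (\<lambda>g' r. eval g' (k # xs) r) gs' rs"
    and "eval f' (k # map (\<lambda>r. r - 1) rs) z"
  shows "eval (r_clocked_Cn f' gs') (k # xs) (if 0 \<in> set rs then 0 else z)"
proof -
  have "eval (Cn r_dec [g']) (k # xs) (r - 1)" if "eval g' (k # xs) r" for g' r
    using that eval_r_dec by (rule eval_Cn_unary)
  then have "list_all2 (\<lambda>g y. eval g (k # xs) y)
      (map (\<lambda>g'. Cn r_dec [g']) gs') (map (\<lambda>r. r - 1) rs)"
    using assms(1) by (auto simp: list_all2_map1 list_all2_map2 elim!: list_all2_mono)
  then have "list_all2 (\<lambda>g y. eval g (k # xs) y)
      (Proj 0 # map (\<lambda>g'. Cn r_dec [g']) gs') (k # map (\<lambda>r. r - 1) rs)"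
    by (auto intro: eval_Proj_eq)
  then have "eval (Cn f' (Proj 0 # map (\<lambda>g'. Cn r_dec [g']) gs')) (k # xs) z"
    using assms(2) by (rule eval_Cn_list_all2)
  then show ?thesis
    unfolding r_clocked_Cn_def
    by (rule eval_Cn_ternary[OF eval_r_prod_list[OF assms(1)] eval_Z _
          eval_r_ifz[THEN eval_value_subst]])
       (simp add: prod_list_zero_iff)
qed

definition r_clocked_Pr :: "nat \<Rightarrow> recf \<Rightarrow> recf \<Rightarrow> recf" where
  "r_clocked_Pr n f' g' =
     Cn (Pr f' (Cn r_ifz [Proj 0, Z,
                  Cn g' (Proj 2 # Cn r_dec [Proj 0] # Proj 1 # map Proj [3..<3 + n])]))
       (Proj 1 # Proj 0 # map Proj [2..<2 + n])"

lemma eval_r_clocked_Pr: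
  assumes f': "\<And>ys. length ys = n \<Longrightarrow> eval f' (k # ys) (F ys)"
    and g': "\<And>ys. length ys = Suc (Suc n) \<Longrightarrow> eval g' (k # ys) (G ys)"
    and "length ys = n"
  shows "eval (r_clocked_Pr n f' g') (k # m # ys) (clocked_Pr F G ys m)"
proof -
  let ?h = "clocked_Pr F G ys"
  let ?step =
    "Cn r_ifz [Proj 0, Z, Cn g' (Proj 2 # Cn r_dec [Proj 0] # Proj 1 # map Proj [3..<3 + n])]"
  have "eval (Pr f' ?step) (m # k # ys) (?h m)"
  proof (rule eval_Pr_iterate)
    show "eval f' (k # ys) (?h 0)"
      using f' assms(3) by simp
    fix j
    have "list_all2 (\<lambda>g y. eval g (?h j # j # k # ys) y) (map Proj [3..<3 + n]) ys"
      by (rule eval_Proj_upt[where as = "[?h j, j, k]"]) (simp_all add: assms(3))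
    then have "list_all2 (\<lambda>g y. eval g (?h j # j # k # ys) y)
        (Proj 2 # Cn r_dec [Proj 0] # Proj 1 # map Proj [3..<3 + n]) (k # (?h j - 1) # j # ys)"
      by (auto intro!: eval_Proj_eq eval_Cn_unary eval_r_dec[THEN eval_value_subst])
    then have "eval (Cn g' (Proj 2 # Cn r_dec [Proj 0] # Proj 1 # map Proj [3..<3 + n]))
        (?h j # j # k # ys) (G ((?h j - 1) # j # ys))"
      by (rule eval_Cn_list_all2) (rule g', simp add: assms(3))
    then show "eval ?step (?h j # j # k # ys) (?h (Suc j))"
      by (auto intro!: eval_Cn_ternary eval_Proj_eq eval_Z eval_r_ifz[THEN eval_value_subst]
          simp: Let_def)
  qed
  moreover have "list_all2 (\<lambda>g y. eval g (k # m # ys) y) (map Proj [2..<2 + n]) ys"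
    by (rule eval_Proj_upt[where as = "[k, m]"]) (simp_all add: assms(3))
  then have "list_all2 (\<lambda>g y. eval g (k # m # ys) y)
      (Proj 1 # Proj 0 # map Proj [2..<2 + n]) (m # k # ys)"
    by (auto intro: eval_Proj_eq)
  ultimately show ?thesis
    unfolding r_clocked_Pr_def by (rule eval_Cn_list_all2[rotated])
qed

definition r_clocked_Mn :: "nat \<Rightarrow> recf \<Rightarrow> recf" where
  "r_clocked_Mn n f' =
     (let r = Cn f' (Proj 2 # Proj 1 # map Proj [3..<3 + n]);
          step = Cn r_ifz [r, r_const 1, Cn r_ifz [Cn r_dec [r], Cn S [Cn S [Proj 1]], Z]]
      in Cn r_dec [Cn (Pr Z (Cn r_ifz [Proj 0, step, Proj 0]))
                      (Proj 0 # Proj 0 # map Proj [1..<1 + n])])"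

lemma eval_r_clocked_Mn:
  assumes f': "\<And>ys. length ys = Suc n \<Longrightarrow> eval f' (k # ys) (F ys)" and "length xs = n"
  shows "eval (r_clocked_Mn n f') (k # xs) (clocked_Mn F xs k - 1)"
proof -
  let ?h = "clocked_Mn F xs"
  let ?r = "Cn f' (Proj 2 # Proj 1 # map Proj [3..<3 + n])"
  let ?step = "Cn r_ifz [?r, r_const 1, Cn r_ifz [Cn r_dec [?r], Cn S [Cn S [Proj 1]], Z]]"
  have "eval (Pr Z (Cn r_ifz [Proj 0, ?step, Proj 0])) (k # k # xs) (?h k)"
  proof (rule eval_Pr_iterate)
    show "eval Z (k # xs) (?h 0)"
      by (simp add: eval_Z)
    fix j
    let ?X = "?h j # j # k # xs"
    have "list_all2 (\<lambda>g y. eval g ?X y) (map Proj [3..<3 + n]) xs"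
      by (rule eval_Proj_upt[where as = "[?h j, j, k]"]) (simp_all add: assms(2))
    then have "list_all2 (\<lambda>g y. eval g ?X y) (Proj 2 # Proj 1 # map Proj [3..<3 + n]) (k # j # xs)"
      by (auto intro: eval_Proj_eq)
    then have r: "eval ?r ?X (F (j # xs))"
      by (rule eval_Cn_list_all2) (rule f', simp add: assms(2))
    have step:
      "eval ?step ?X (if F (j # xs) = 0 then 1 else if F (j # xs) - 1 = 0 then j + 2 else 0)"
      by (rule eval_Cn_ternary[OF r eval_r_const
            eval_Cn_ternary[OF eval_Cn_unary[OF r eval_r_dec] _ eval_Z eval_r_ifz]
            eval_r_ifz[THEN eval_value_subst]])
         (auto intro!: eval_Cn_unary eval_Proj_eq eval_S_eq)
    show "eval (Cn r_ifz [Proj 0, ?step, Proj 0]) ?X (?h (Suc j))"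
      by (rule eval_Cn_ternary[OF _ step _ eval_r_ifz[THEN eval_value_subst]])
         (auto intro: eval_Proj_eq simp: Let_def)
  qed
  moreover have "list_all2 (\<lambda>g y. eval g (k # xs) y) (map Proj [1..<1 + n]) xs"
    by (rule eval_Proj_upt[where as = "[k]"]) (simp_all add: assms(2))
  then have "list_all2 (\<lambda>g y. eval g (k # xs) y)
      (Proj 0 # Proj 0 # map Proj [1..<1 + n]) (k # k # xs)"
    by (auto intro: eval_Proj_eq)
  ultimately show ?thesis
    unfolding r_clocked_Mn_def Let_def
    by (intro eval_Cn_unary[OF _ eval_r_dec] eval_Cn_list_all2)
qed

fun r_clocked :: "nat \<Rightarrow> recf \<Rightarrow> recf" where
  "r_clocked n Z = r_const 1"
| "r_clocked n S = (if n = 0 then Z else Cn S [Cn S [Proj 1]])"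
| "r_clocked n (Proj i) = (if i < n then Cn S [Proj (Suc i)] else Z)"
| "r_clocked n (Cn f gs) = r_clocked_Cn (r_clocked (length gs) f) (map (r_clocked n) gs)"
| "r_clocked 0 (Pr f g) = Z"
| "r_clocked (Suc n) (Pr f g) = r_clocked_Pr n (r_clocked n f) (r_clocked (Suc (Suc n)) g)"
| "r_clocked n (Mn f) = r_clocked_Mn n (r_clocked (Suc n) f)"

lemma eval_r_clocked: "length xs = n \<Longrightarrow> eval (r_clocked n f) (k # xs) (clocked f k xs)"
proof (induction f arbitrary: n xs)
  case (Cn f gs)
  let ?rs = "map (\<lambda>g. clocked g k xs) gs"
  have "list_all2 (\<lambda>g' r. eval g' (k # xs) r) (map (r_clocked n) gs) ?rs"
    using Cn.IH(2) Cn.prems by (auto simp: list_all2_conv_all_nth)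
  moreover have "eval (r_clocked (length gs) f) (k # map (\<lambda>r. r - 1) ?rs)
      (clocked f k (map (\<lambda>r. r - 1) ?rs))"
    using Cn.IH(1)[where xs = "map (\<lambda>r. r - 1) ?rs"] by simp
  ultimately have "eval (r_clocked n (Cn f gs)) (k # xs)
      (if 0 \<in> set ?rs then 0 else clocked f k (map (\<lambda>r. r - 1) ?rs))"
    unfolding r_clocked.simps by (rule eval_r_clocked_Cn)
  then show ?case
    by (simp only: clocked.simps Let_def)
next
  case (Pr f g)
  show ?case
  proof (cases xs)
    case Nil
    then show ?thesis using Pr.prems by (auto intro: eval_Z_eq)
  next
    case (Cons m ys)
    then have "eval (r_clocked_Pr (length ys) (r_clocked (length ys) f)
        (r_clocked (Suc (Suc (length ys))) g))
        (k # m # ys) (clocked_Pr (clocked f k) (clocked g k) ys m)"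
      by (intro eval_r_clocked_Pr Pr.IH) simp_all
    then show ?thesis
      using Cons Pr.prems by auto
  qed
next
  case (Mn f)
  have "eval (r_clocked_Mn n (r_clocked (Suc n) f)) (k # xs) (clocked_Mn (clocked f k) xs k - 1)"
    by (intro eval_r_clocked_Mn Mn.IH Mn.prems) simp
  then show ?case
    by simp
next
  case S
  then show ?case
    by (cases xs)
       (auto intro!: eval_Z_eq eval_Cn_unary[OF eval_Cn_unary[OF eval_Proj_eq eval_S] eval_S])
next
  case (Proj i)
  then show ?case
    by (auto intro!: eval_Z_eq eval_Cn_unary[OF eval_Proj_eq eval_S])
qed (use eval_r_const[of 1] in simp)

section \<open>Counting clock values\<close>

primrec count_less :: "(nat \<Rightarrow> bool) \<Rightarrow> nat \<Rightarrow> nat" where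
  "count_less P 0 = 0"
| "count_less P (Suc n) = count_less P n + (if P n then 1 else 0)"

lemma count_less_all: "(\<And>k. P k) \<Longrightarrow> count_less P n = n"
  by (induction n) auto

lemma count_less_eq_min: "(\<And>k. P k \<longleftrightarrow> k < N) \<Longrightarrow> count_less P n = min n N"
  by (induction n) auto

lemma count_less_le: "(\<And>k. K \<le> k \<Longrightarrow> \<not> P k) \<Longrightarrow> count_less P n \<le> K"
proof (induction n)
  case (Suc n)
  have "count_less P n \<le> n"
    by (induction n) auto
  then show ?case
    using Suc by (cases "n < K") auto
qed simp

lemma count_less_add_count_less:
  assumes "\<And>k k'. \<not> P k \<Longrightarrow> k \<le> k' \<Longrightarrow> \<not> P k'"
  shows "count_less P (count_less P a + b) = count_less P (a + b)"
proof (cases "\<forall>k. P k")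
  case False
  define N where "N = (LEAST k. \<not> P k)"
  have "P k \<longleftrightarrow> k < N" for k
    using False assms unfolding N_def by (metis LeastI not_less_Least not_less)
  then show ?thesis
    by (simp add: count_less_eq_min)
qed (simp add: count_less_all)

definition r_count_less :: "recf \<Rightarrow> recf" where
  "r_count_less p = Pr Z (Cn r_add [Proj 0, Cn p [Proj 1, Proj 2]])"

lemma eval_r_count_less:
  assumes "\<And>k. eval p [k, w] (if P k then 1 else 0)"
  shows "eval (r_count_less p) (n # w # ys) (count_less P n)"
  unfolding r_count_less_def
proof (rule eval_Pr_iterate)
  fix j
  have indicator:
    "eval (Cn p [Proj 1, Proj 2]) (count_less P j # j # w # ys) (if P j then 1 else 0)"
    by (rule eval_Cn_binary[OF _ _ assms]) (auto intro: eval_Proj_eq)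
  show "eval (Cn r_add [Proj 0, Cn p [Proj 1, Proj 2]]) (count_less P j # j # w # ys)
      (count_less P (Suc j))"
    by (rule eval_Cn_binary[OF _ indicator eval_r_add[THEN eval_value_subst]])
       (auto intro: eval_Proj_eq)
qed (simp add: eval_Z)

definition "r_le1 = Cn r_ifz [Cn r_dec [Proj 0], r_const 1, Z]"

lemma eval_r_le1: "eval r_le1 (x # ys) (if x \<le> 1 then 1 else 0)"
  unfolding r_le1_def
  by (rule eval_Cn_ternary[OF eval_Cn_unary[OF _ eval_r_dec] eval_r_const eval_Z
        eval_r_ifz[THEN eval_value_subst]])
     (auto intro: eval_Proj_eq)

lemma finite_range_count_clocked_iff:
  assumes "eval f xs v"
  shows "finite (range (count_less (\<lambda>k. clocked f k xs \<le> 1))) \<longleftrightarrow> v \<noteq> 0"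
proof -
  obtain K where K: "clocked f K xs = Suc v"
    using clocked_complete[OF assms] by blast
  have clocked_cases: "clocked f k xs = 0 \<or> clocked f k xs = Suc v" for k
  proof (cases "clocked f k xs")
    case (Suc v')
    then show ?thesis
      using eval_deterministic[OF assms clocked_sound[OF Suc]] by simp
  qed simp
  show ?thesis
  proof
    assume finite: "finite (range (count_less (\<lambda>k. clocked f k xs \<le> 1)))"
    show "v \<noteq> 0"
    proof
      assume "v = 0"
      then have "clocked f k xs \<le> 1" for k
        using clocked_cases[of k] by auto
      then have "range (count_less (\<lambda>k. clocked f k xs \<le> 1)) = UNIV"
        by (simp add: count_less_all)
      then show False
        using finite by simp
    qed
  next
    assume "v \<noteq> 0"
    have "count_less (\<lambda>k. clocked f k xs \<le> 1) n \<le> K" for n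
      by (rule count_less_le) (use clocked_mono[OF K] \<open>v \<noteq> 0\<close> in auto)
    then have "range (count_less (\<lambda>k. clocked f k xs \<le> 1)) \<subseteq> {..K}"
      by auto
    then show "finite (range (count_less (\<lambda>k. clocked f k xs \<le> 1)))"
      by (rule finite_subset) simp
  qed
qed

section \<open>Tagged counters\<close>

definition tagged :: "nat \<Rightarrow> nat \<Rightarrow> nat" where
  "tagged w s = 2 + prod_encode (w, s)"

lemma tagged_inject [simp]: "tagged w s = tagged w' s' \<longleftrightarrow> w = w' \<and> s = s'"
  by (auto simp: tagged_def prod_encode_eq)

lemma tagged_ge_2: "2 \<le> tagged w s"
  by (simp add: tagged_def)

lemma nat_tagged_cases:
  obtains "x = 0" | "x = 1" | w s where "x = tagged w s"
proof -
  consider "x = 0" | "x = 1" | "2 \<le> x"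
    by linarith
  then show ?thesis
  proof cases
    case 3
    then have "x = tagged (fst (prod_decode (x - 2))) (snd (prod_decode (x - 2)))"
      by (simp add: tagged_def prod_decode_inverse)
    then show ?thesis using that by blast
  qed (use that in auto)
qed

definition tagged_mult :: "(nat \<Rightarrow> nat \<Rightarrow> nat) \<Rightarrow> nat \<Rightarrow> nat \<Rightarrow> nat" where
  "tagged_mult c x y =
     (if x = 0 \<or> y = 0 then 0 else if x = 1 then y else if y = 1 then x else
      case (prod_decode (x - 2), prod_decode (y - 2)) of
        ((w, s), (w', s')) \<Rightarrow> if w = w' then tagged w (c w (s + s')) else 0)"

lemma tagged_mult_simps [simp]:
  "tagged_mult c 0 y = 0" "tagged_mult c x 0 = 0"
  "tagged_mult c (Suc 0) y = y" "tagged_mult c x (Suc 0) = x"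
  "tagged_mult c (tagged w s) (tagged w' s') = (if w = w' then tagged w (c w (s + s')) else 0)"
  using tagged_ge_2[of w s] tagged_ge_2[of w' s']
  by (auto simp: tagged_mult_def tagged_def prod_encode_inverse)

lemma tagged_mult_assoc:
  assumes "\<And>w a b. c w (c w a + b) = c w (a + b)"
  shows "tagged_mult c (tagged_mult c x y) z = tagged_mult c x (tagged_mult c y z)"
proof -
  have "c w (a + c w (b + d)) = c w (c w (a + b) + d)" for w a b d
    using assms[of w "b + d" a] assms[of w "a + b" d] by (simp add: ac_simps)
  then show ?thesis
    by (cases x rule: nat_tagged_cases;
        cases y rule: nat_tagged_cases;
        cases z rule: nat_tagged_cases) auto
qed

definition r_tagged :: "recf \<Rightarrow> recf \<Rightarrow> recf" where
  "r_tagged gw gs = Cn r_add [r_const 2, Cn r_prod_encode [gw, gs]]"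

lemma eval_r_tagged: "eval gw xs w \<Longrightarrow> eval gs xs s \<Longrightarrow> eval (r_tagged gw gs) xs (tagged w s)"
  unfolding r_tagged_def tagged_def
  by (rule eval_Cn_binary[OF eval_r_const eval_Cn_binary[OF _ _ eval_r_prod_encode] eval_r_add])

definition r_tagged_mult :: "recf \<Rightarrow> recf" where
  "r_tagged_mult rc =
     (let x' = Cn r_sub [Proj 0, r_const 2]; y' = Cn r_sub [Proj 1, r_const 2];
          w = Cn r_pdec1 [x']; s = Cn r_pdec2 [x']; w' = Cn r_pdec1 [y']; s' = Cn r_pdec2 [y'];
          distance = Cn r_add [Cn r_sub [w, w'], Cn r_sub [w', w]];
          product = Cn r_ifz [distance, r_tagged w (Cn rc [Cn r_add [s, s'], w]), Z]
      in Cn r_ifz [Proj 0, Z, Cn r_ifz [Proj 1, Z,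
           Cn r_ifz [Cn r_dec [Proj 0], Proj 1, Cn r_ifz [Cn r_dec [Proj 1], Proj 0, product]]]])"

lemma eval_r_tagged_mult:
  assumes rc: "\<And>w s. eval rc [s, w] (c w s)"
  shows "eval (r_tagged_mult rc) (x # y # ys) (tagged_mult c x y)"
proof -
  let ?X = "x # y # ys"
  let ?x' = "Cn r_sub [Proj 0, r_const 2]" and ?y' = "Cn r_sub [Proj 1, r_const 2]"
  let ?w = "Cn r_pdec1 [?x']" and ?s = "Cn r_pdec2 [?x']"
  let ?w' = "Cn r_pdec1 [?y']" and ?s' = "Cn r_pdec2 [?y']"
  let ?product = "Cn r_ifz [Cn r_add [Cn r_sub [?w, ?w'], Cn r_sub [?w', ?w]],
    r_tagged ?w (Cn rc [Cn r_add [?s, ?s'], ?w]), Z]"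
  obtain w s w' s' where dec: "prod_decode (x - 2) = (w, s)" "prod_decode (y - 2) = (w', s')"
    by fastforce
  have px: "eval (Proj 0) ?X x" and py: "eval (Proj 1) ?X y"
    by (rule eval_Proj_eq; simp)+
  have x': "eval ?x' ?X (x - 2)" and y': "eval ?y' ?X (y - 2)"
    by (rule eval_Cn_binary[OF px eval_r_const eval_r_sub]
        eval_Cn_binary[OF py eval_r_const eval_r_sub])+
  have w: "eval ?w ?X w" and s: "eval ?s ?X s" and w': "eval ?w' ?X w'" and s': "eval ?s' ?X s'"
    using eval_Cn_unary[OF x' eval_r_pdec1] eval_Cn_unary[OF x' eval_r_pdec2]
      eval_Cn_unary[OF y' eval_r_pdec1] eval_Cn_unary[OF y' eval_r_pdec2] dec
    by simp_all
  have distance: "eval (Cn r_add [Cn r_sub [?w, ?w'], Cn r_sub [?w', ?w]]) ?X ((w - w') + (w' - w))"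
    by (rule eval_Cn_binary[OF eval_Cn_binary[OF w w' eval_r_sub] eval_Cn_binary[OF w' w eval_r_sub]
          eval_r_add])
  have tagged: "eval (r_tagged ?w (Cn rc [Cn r_add [?s, ?s'], ?w])) ?X (tagged w (c w (s + s')))"
    by (rule eval_r_tagged[OF w eval_Cn_binary[OF eval_Cn_binary[OF s s' eval_r_add] w rc]])
  have "(w - w') + (w' - w) = 0 \<longleftrightarrow> w = w'"
    by arith
  then have product: "eval ?product ?X (if w = w' then tagged w (c w (s + s')) else 0)"
    by (intro eval_Cn_ternary[OF distance tagged eval_Z eval_r_ifz[THEN eval_value_subst]]) simp
  show ?thesis
    unfolding r_tagged_mult_def Let_def
    by (rule eval_Cn_ternary[OF px eval_Z eval_Cn_ternary[OF py eval_Z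
          eval_Cn_ternary[OF eval_Cn_unary[OF px eval_r_dec] py
            eval_Cn_ternary[OF eval_Cn_unary[OF py eval_r_dec] px product eval_r_ifz] eval_r_ifz]
          eval_r_ifz] eval_r_ifz[THEN eval_value_subst]])
       (auto simp: tagged_mult_def dec)
qed

section \<open>The diagonal instance\<close>

text \<open>\<open>inst_code w\<close> is the code of the diagonal instance whose product program has index
  \<open>w\<close> (see \<open>enc_inst_diag_inst\<close>); it is a function of \<open>w\<close> alone, which is what lets the
  product program compute it.\<close>
definition inst_code :: "nat \<Rightarrow> nat" where
  "inst_code w = list_encode
     [enc_recf (r_const 1), enc_recf r_add, w, 0, 1, list_encode [0, 1], 1,
      list_encode [list_encode [list_encode [], 0, 0, tagged w 0],
                   list_encode [list_encode [0], 1, 0, tagged w 1]],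
      list_encode [1]]"

definition r_inst_code :: recf where
  "r_inst_code = r_list_encode
     [r_const (enc_recf (r_const 1)), r_const (enc_recf r_add), Proj 0, r_const 0, r_const 1,
      r_const (list_encode [0, 1]), r_const 1,
      r_list_encode
        [r_list_encode
           [r_const (list_encode []), r_const 0, r_const 0, r_tagged (Proj 0) (r_const 0)],
         r_list_encode
           [r_const (list_encode [0]), r_const 1, r_const 0, r_tagged (Proj 0) (r_const 1)]],
      r_const (list_encode [1])]"

lemma eval_r_inst_code: "eval r_inst_code (w # ys) (inst_code w)"
proof -
  have "eval (Proj 0) (w # ys) w"
    by (rule eval_Proj_eq) simp_all
  then show ?thesis
    unfolding r_inst_code_def inst_code_def
    by (intro eval_r_list_encode list_all2_Cons[THEN iffD2] conjI list.rel_intros(1) eval_r_const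
        eval_r_tagged)
qed

definition diag_count :: "recf \<Rightarrow> nat \<Rightarrow> nat \<Rightarrow> nat" where
  "diag_count d w = count_less (\<lambda>k. clocked d k [inst_code w] \<le> 1)"

lemma diag_count_add_diag_count: "diag_count d w (diag_count d w a + b) = diag_count d w (a + b)"
  unfolding diag_count_def
proof (rule count_less_add_count_less)
  fix k k'
  assume "\<not> clocked d k [inst_code w] \<le> 1" and "k \<le> k'"
  then show "\<not> clocked d k' [inst_code w] \<le> 1"
    using clocked_mono[of d k "[inst_code w]" "clocked d k [inst_code w] - 1" k'] by simp
qed

definition r_diag_count :: "recf \<Rightarrow> recf" where
  "r_diag_count d = r_count_less (Cn r_le1 [Cn (r_clocked 1 d) [Proj 0, Cn r_inst_code [Proj 1]]])"

lemma eval_r_diag_count: "eval (r_diag_count d) [s, w] (diag_count d w s)"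
  unfolding r_diag_count_def diag_count_def
proof (rule eval_r_count_less)
  fix k
  have "eval (Cn (r_clocked 1 d) [Proj 0, Cn r_inst_code [Proj 1]]) [k, w]
      (clocked d k [inst_code w])"
    by (rule eval_Cn_binary[OF _ eval_Cn_unary[OF _ eval_r_inst_code] eval_r_clocked])
       (auto intro: eval_Proj_eq)
  then show "eval (Cn r_le1 [Cn (r_clocked 1 d) [Proj 0, Cn r_inst_code [Proj 1]]]) [k, w]
      (if clocked d k [inst_code w] \<le> 1 then 1 else 0)"
    using eval_r_le1 by (rule eval_Cn_unary)
qed

definition r_diag_mult :: "recf \<Rightarrow> recf" where
  "r_diag_mult d = r_tagged_mult (r_diag_count d)"

abbreviation diag_tag :: "recf \<Rightarrow> nat" where
  "diag_tag d \<equiv> enc_recf (r_diag_mult d)"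

definition diag_inst :: "recf \<Rightarrow> inst" where
  "diag_inst d = Inst (r_const 1) r_add (r_diag_mult d) 0 1 [0, 1] 1
     [([], 0, 0, tagged (diag_tag d) 0), ([0], 1, 0, tagged (diag_tag d) 1)] [1]"

lemma diag_inst_sel:
  "nQ (diag_inst d) = 1" "zeroI (diag_inst d) = 0" "oneI (diag_inst d) = 1"
  "deltaI (diag_inst d) [] 0 0 = tagged (diag_tag d) 0"
  "deltaI (diag_inst d) [0] 1 0 = tagged (diag_tag d) 1"
  by (simp_all add: diag_inst_def deltaI_def)

lemma enc_inst_diag_inst: "enc_inst (diag_inst d) = inst_code (diag_tag d)"
  by (simp add: enc_inst_def diag_inst_def inst_code_def)

lemma carrier_diag_inst: "carrier (diag_inst d) = UNIV"
  using eval_r_const[of 1] by (simp add: carrier_def diag_inst_def)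

lemma plusI_diag_inst: "plusI (diag_inst d) a b = a + b"
  using eval_r_add[of a b "[]"] eval_deterministic
  by (auto simp: plusI_def diag_inst_def)

lemma eval_r_diag_mult: "eval (r_diag_mult d) (x # y # ys) (tagged_mult (diag_count d) x y)"
  unfolding r_diag_mult_def using eval_r_diag_count by (rule eval_r_tagged_mult)

lemma timesI_diag_inst: "timesI (diag_inst d) a b = tagged_mult (diag_count d) a b"
  using eval_r_diag_mult[of d a b "[]"] eval_deterministic
  by (auto simp: timesI_def diag_inst_def)

lemma valid_instance_diag_inst: "valid_instance (diag_inst d)"
proof -
  have "computable_bimonoid (diag_inst d)"
    unfolding computable_bimonoid_def carrier_diag_inst
    using eval_r_const[of 1] eval_r_add[of _ _ "[]"] eval_r_diag_mult[of d _ _ "[]"]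
    by (simp add: diag_inst_def) blast
  moreover have "strong_bimonoid (diag_inst d)"
    unfolding strong_bimonoid_def carrier_diag_inst plusI_diag_inst timesI_diag_inst
    by (auto simp: diag_inst_def Let_def intro: tagged_mult_assoc diag_count_add_diag_count)
  ultimately show ?thesis
    unfolding valid_instance_def ranked_alphabet_def wta_ok_def bu_deterministic_def
      carrier_diag_inst
    by (auto simp: diag_inst_def)
qed

primrec chain_tree :: "nat \<Rightarrow> tree" where
  "chain_tree 0 = Node 0 []"
| "chain_tree (Suc n) = Node 1 [chain_tree n]"

lemma wf_tree_diag_inst_iff: "wf_tree (diag_inst d) t \<longleftrightarrow> t \<in> range chain_tree"
proof
  show "wf_tree (diag_inst d) t \<Longrightarrow> t \<in> range chain_tree"
  proof (induction t)
    case (Node s ts)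
    then have "s = 0 \<and> ts = [] \<or> s = 1 \<and> (\<exists>t. ts = [t] \<and> wf_tree (diag_inst d) t)"
      by (auto simp: diag_inst_def less_Suc_eq length_Suc_conv)
    then show ?case
    proof (elim disjE exE conjE)
      assume "s = 0" and "ts = []"
      then show ?case
        by (metis chain_tree.simps(1) rangeI)
    next
      fix t
      assume "s = 1" and "ts = [t]" and "wf_tree (diag_inst d) t"
      then obtain n where "t = chain_tree n"
        using Node.IH by auto
      then show ?case
        using \<open>s = 1\<close> \<open>ts = [t]\<close> by (metis chain_tree.simps(2) rangeI)
    qed
  qed
  show "t \<in> range chain_tree \<Longrightarrow> wf_tree (diag_inst d) t"
  proof (elim rangeE)
    fix n
    show "t = chain_tree n \<Longrightarrow> wf_tree (diag_inst d) t"
      by (induction n arbitrary: t) (auto simp: diag_inst_def)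
  qed
qed

lemma hvec_diag_inst_chain_tree:
  "hvec (diag_inst d) (chain_tree n) =
     [tagged (diag_tag d) (diag_count d (diag_tag d) n)]"
proof (induction n)
  case (Suc n)
  then show ?case
    using diag_count_add_diag_count[of d _ n 1] diag_inst_sel[of d]
    by (simp add: vec_op_def sumI_def prodI_def plusI_diag_inst timesI_diag_inst)
qed (simp add: vec_op_def sumI_def prodI_def plusI_diag_inst timesI_diag_inst diag_inst_sel
    diag_count_def)

lemma finite_nerode_carrier_diag_inst_iff:
  "finite (nerode_carrier (diag_inst d)) \<longleftrightarrow>
     finite (range (diag_count d (diag_tag d)))"
proof -
  have "nerode_carrier (diag_inst d) =
      (\<lambda>c. [tagged (diag_tag d) c]) ` range (diag_count d (diag_tag d))"
    unfolding nerode_carrier_def wf_tree_diag_inst_iff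
    by (auto simp: hvec_diag_inst_chain_tree image_image)
  moreover have "inj (\<lambda>c. [tagged (diag_tag d) c])"
    by (rule injI) simp
  ultimately show ?thesis
    by (simp add: finite_image_iff inj_on_subset)
qed

theorem theorem8p7:
  shows "\<not> (\<exists>d :: recf. \<forall>I. valid_instance I \<longrightarrow>
            (\<exists>v. eval d [enc_inst I] v \<and> (v = 0 \<longleftrightarrow> finite (nerode_carrier I))))"
proof
  assume "\<exists>d :: recf. \<forall>I. valid_instance I \<longrightarrow>
            (\<exists>v. eval d [enc_inst I] v \<and> (v = 0 \<longleftrightarrow> finite (nerode_carrier I)))"
  then obtain d v where v: "eval d [enc_inst (diag_inst d)] v"
    and decides: "v = 0 \<longleftrightarrow> finite (nerode_carrier (diag_inst d))"
    using valid_instance_diag_inst by blast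
  have "finite (nerode_carrier (diag_inst d)) \<longleftrightarrow> v \<noteq> 0"
    using finite_range_count_clocked_iff[OF v]
    unfolding finite_nerode_carrier_diag_inst_iff diag_count_def enc_inst_diag_inst .
  then show False
    using decides by blast
qed

end
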